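(* The diameter of the swap graph $\mathcal{G}_n$ is $\Omega\!\left(\frac{n}{\ln n}\right)$ as $n\to\infty$.
   Context: Sequences are finite sequences of pairwise distinct integers indexed from $1$. The Cartesian tree $C(x)$ of a sequence $x$ of length $n$ is empty if $n=0$; otherwise, if $x[i]$ is the minimum of $x$, it is the binary tree with root $i$, left subtree $C(x[1\ldots i-1])$ and right subtree $C(x[i+1\ldots n])$. $x\approx_{CT}y$ means $C(x)=C(y)$. For $1\le i\le n-1$, $\tau(x,i)$ is obtained from $x$ by exchanging $x[i]$ and $x[i+1]$. For sequences $x,y$ of length $n$, $x\overset{\tau}{\approx}_{CT}y$ means $x\approx_{CT}y$, or there is $i\in\{1,\ldots,n-1\}$ with $\tau(x,i)\approx_{CT}y$ or $\tau(y,i)\approx_{CT}x$. The swap graph $\mathcal{G}_n$ has as vertex set the set $\mathcal{C}_n$ of Cartesian trees with $n$ nodes (i.e. all binary trees with $n$ nodes), with an edge $\{C(x),C(y)\}$ whenever $x\overset{\tau}{\approx}_{CT}y$ (and $C(x)\neq C(y)$). *)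

theory Defs
  imports Complex_Main "HOL-Library.Tree" "HOL-Library.Extended_Real"
begin

definition minpos :: "int list \<Rightarrow> nat" where
  "minpos xs = (LEAST i. i < length xs \<and> xs ! i = Min (set xs))"

lemma minpos_less: "xs \<noteq> [] \<Longrightarrow> minpos xs < length xs"
proof -
  assume "xs \<noteq> []"
  then have "Min (set xs) \<in> set xs" by simp
  then obtain i where "i < length xs" "xs ! i = Min (set xs)" by (auto simp: in_set_conv_nth)
  then show ?thesis unfolding minpos_def by (metis (mono_tags, lifting) LeastI)
qed

(* Cartesian tree of a sequence; nodes are labelled by (1-based) positions,
   offset by k for subsequences.  C(x) = ctree 0 x. *)
function ctree :: "nat \<Rightarrow> int list \<Rightarrow> nat tree" where
  "ctree k xs = (if xs = [] then Leaf else
     Node (ctree k (take (minpos xs) xs)) (k + minpos xs + 1)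
          (ctree (k + minpos xs + 1) (drop (minpos xs + 1) xs)))"
  by pat_completeness auto
termination
  by (relation "measure (\<lambda>(k, xs). length xs)") (auto simp: min_def dest: minpos_less)

definition cart :: "int list \<Rightarrow> nat tree" where
  "cart xs = ctree 0 xs"

(* tau(x,i): exchange x[i] and x[i+1], with 1-based i *)
definition tau :: "int list \<Rightarrow> nat \<Rightarrow> int list" where
  "tau xs i = xs[i - 1 := xs ! i, i := xs ! (i - 1)]"

definition seqs :: "nat \<Rightarrow> int list set" where
  "seqs n = {xs. distinct xs \<and> length xs = n}"

definition tau_equiv :: "int list \<Rightarrow> int list \<Rightarrow> bool" where
  "tau_equiv x y \<longleftrightarrow> length x = length y \<and>
     (cart x = cart y \<or>
      (\<exists>i\<in>{1..length x - 1}. cart (tau x i) = cart y \<or> cart (tau y i) = cart x))"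

definition swap_vertices :: "nat \<Rightarrow> nat tree set" where
  "swap_vertices n = cart ` seqs n"

definition swap_edge :: "nat \<Rightarrow> nat tree \<Rightarrow> nat tree \<Rightarrow> bool" where
  "swap_edge n s t \<longleftrightarrow> s \<noteq> t \<and>
     (\<exists>x\<in>seqs n. \<exists>y\<in>seqs n. s = cart x \<and> t = cart y \<and> tau_equiv x y)"

definition swap_walk :: "nat \<Rightarrow> nat tree \<Rightarrow> nat tree \<Rightarrow> nat \<Rightarrow> bool" where
  "swap_walk n u v k \<longleftrightarrow> (\<exists>p. length p = k + 1 \<and> hd p = u \<and> last p = v \<and>
      set p \<subseteq> swap_vertices n \<and> (\<forall>j<k. swap_edge n (p ! j) (p ! (j + 1))))"

(* graph distance (\<infinity> if no path) *)
definition swap_dist :: "nat \<Rightarrow> nat tree \<Rightarrow> nat tree \<Rightarrow> enat" where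
  "swap_dist n u v = (INF k \<in> {k. swap_walk n u v k}. enat k)"

definition swap_diameter :: "nat \<Rightarrow> enat" where
  "swap_diameter n = (SUP uv \<in> swap_vertices n \<times> swap_vertices n. swap_dist n (fst uv) (snd uv))"

end

theory Submission
  imports Defs "HOL-Combinatorics.Permutations"
begin

(* A Cartesian tree is determined by, and determines, the vector of nearest-smaller-to-the-left
   pointers of any sequence realising it.  Exchanging the entries at positions p and p+1 changes
   these pointers only at p and p+1 and by redirecting pointers to p or p+1 further right; which of
   them are redirected is decided by a single threshold, because the entries pointing to p+1
   decrease from left to right.  So every vertex of G_n has at most (n+1)^4 neighbours and a ball
   of radius d contains at most ((n+1)^4+1)^d trees.  Sequences with different ascent sets have
   different Cartesian trees, so G_n has at least 2^(n-1) vertices, and comparing the two counts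
   gives diameter >= (n-1) ln 2 / ln((n+1)^4+1) >= n / (40 ln n). *)

section \<open>Nearest smaller values to the left\<close>

definition smaller_left :: "'a::linorder list \<Rightarrow> nat \<Rightarrow> nat set" where
  "smaller_left x j = {k. k < j \<and> x ! k < x ! j}"

definition nsl :: "'a::linorder list \<Rightarrow> nat \<Rightarrow> nat" where
  "nsl x j = (if smaller_left x j = {} then 0 else Suc (Max (smaller_left x j)))"

definition nslv :: "'a::linorder list \<Rightarrow> nat list" where
  "nslv x = map (nsl x) [0..<length x]"

lemma finite_smaller_left [simp]: "finite (smaller_left x j)"
  unfolding smaller_left_def by (rule finite_subset[of _ "{..<j}"]) auto

lemma nsl_eq_0_iff: "nsl x j = 0 \<longleftrightarrow> smaller_left x j = {}"
  by (simp add: nsl_def)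

lemma nsl_eq_Suc_iff:
  "nsl x j = Suc q \<longleftrightarrow> q \<in> smaller_left x j \<and> (\<forall>k \<in> smaller_left x j. k \<le> q)"
  by (auto simp: nsl_def Max_eq_iff)

lemma nsl_le: "nsl x j \<le> j"
proof (cases "smaller_left x j = {}")
  case False
  then have "Max (smaller_left x j) < j"
    using Max_in[OF finite_smaller_left False] by (simp add: smaller_left_def)
  then show ?thesis using False by (simp add: nsl_def Suc_le_eq)
qed (simp add: nsl_def)

lemma length_nslv [simp]: "length (nslv x) = length x"
  by (simp add: nslv_def)

lemma nth_nslv [simp]: "j < length x \<Longrightarrow> nslv x ! j = nsl x j"
  by (simp add: nslv_def)

lemma nsl_cong:
  assumes "\<And>k. k \<le> j \<Longrightarrow> x ! k = y ! k"
  shows "nsl x j = nsl y j"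
proof -
  have "smaller_left x j = smaller_left y j" using assms by (auto simp: smaller_left_def)
  then show ?thesis by (simp add: nsl_def)
qed

lemma nsl_ascent_iff: "0 < j \<Longrightarrow> nsl x j = j \<longleftrightarrow> x ! (j - 1) < x ! j"
  using nsl_eq_Suc_iff[of x j "j - 1"] by (auto simp: smaller_left_def)

lemma equal_nsl_imp_decreasing:
  assumes "distinct x" "i < j" "j < length x" "nsl x i = Suc q" "nsl x j = Suc q"
  shows "x ! j < x ! i"
proof -
  have "q < i" using assms(4) by (simp add: nsl_eq_Suc_iff smaller_left_def)
  then have "i \<notin> smaller_left x j" using assms(5) by (auto simp: nsl_eq_Suc_iff)
  moreover have "x ! i \<noteq> x ! j" using assms(1-3) by (simp add: nth_eq_iff_index_eq)
  ultimately show ?thesis using assms(2) by (auto simp: smaller_left_def)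
qed

section \<open>Cartesian trees and nearest smaller values\<close>

lemma ctree_Nil [simp]: "ctree k [] = Leaf"
  by (simp add: ctree.simps)

lemma ctree_nonempty:
  "xs \<noteq> [] \<Longrightarrow> ctree k xs = Node (ctree k (take (minpos xs) xs)) (k + minpos xs + 1)
     (ctree (k + minpos xs + 1) (drop (minpos xs + 1) xs))"
  by (subst ctree.simps) simp

declare ctree.simps [simp del]

lemma minpos_less_nth:
  assumes "distinct xs" "j < length xs" "j \<noteq> minpos xs"
  shows "xs ! minpos xs < xs ! j"
proof -
  have ne: "xs \<noteq> []" using assms(2) by auto
  then have m: "minpos xs < length xs" by (rule minpos_less)
  from ne have "Min (set xs) \<in> set xs" by simp
  then obtain i where i: "i < length xs" "xs ! i = Min (set xs)" by (auto simp: in_set_conv_nth)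
  have "xs ! minpos xs = Min (set xs)"
    unfolding minpos_def by (rule LeastI2[of _ i]) (use i in simp_all)
  moreover have "Min (set xs) \<le> xs ! j" using assms by simp
  moreover have "xs ! minpos xs \<noteq> xs ! j" using assms m by (simp add: nth_eq_iff_index_eq)
  ultimately show ?thesis by simp
qed

lemma nsl_take: "j < m \<Longrightarrow> nsl (take m x) j = nsl x j"
  by (rule nsl_cong) simp

lemma nsl_minpos:
  assumes "distinct x" "x \<noteq> []"
  shows "nsl x (minpos x) = 0"
proof -
  have "\<not> x ! k < x ! minpos x" if "k < minpos x" for k
    using minpos_less_nth[OF assms(1), of k] minpos_less[OF assms(2)] that by simp
  then show ?thesis by (simp add: nsl_eq_0_iff smaller_left_def)
qed

lemma minpos_in_smaller_left:
  "distinct x \<Longrightarrow> minpos x < j \<Longrightarrow> j < length x \<Longrightarrow> minpos x \<in> smaller_left x j"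
  using minpos_less_nth by (simp add: smaller_left_def)

lemma nsl_eq_0_imp_le_minpos:
  assumes "distinct x" "j < length x" "nsl x j = 0"
  shows "j \<le> minpos x"
proof (rule ccontr)
  assume "\<not> j \<le> minpos x"
  then have "minpos x \<in> smaller_left x j" using assms(1,2) by (simp add: minpos_in_smaller_left)
  then show False using assms(3) by (simp add: nsl_eq_0_iff)
qed

definition shift_nsl :: "nat \<Rightarrow> nat \<Rightarrow> nat" where
  "shift_nsl m v = (if v = 0 then Suc m else v + Suc m)"

lemma inj_shift_nsl: "inj (shift_nsl m)"
  by (auto simp: inj_def shift_nsl_def split: if_splits)

lemma nsl_right_of_minpos:
  assumes "distinct x" "j < length x - Suc (minpos x)"
  shows "nsl x (Suc (minpos x) + j) = shift_nsl (minpos x) (nsl (drop (Suc (minpos x)) x) j)"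
proof -
  define m where "m = minpos x"
  define S where "S = smaller_left x (Suc m + j)"
  define D where "D = smaller_left (drop (Suc m) x) j"
  have "m \<in> S" using assms minpos_in_smaller_left unfolding S_def m_def by simp
  have "Suc m \<le> length x" using assms(2) unfolding m_def by linarith
  then have "drop (Suc m) x ! i = x ! (Suc m + i)" for i by simp
  then have right: "Suc m + i \<in> S \<longleftrightarrow> i \<in> D" for i
    by (simp add: S_def D_def smaller_left_def)
  have split: "k \<le> m \<or> (\<exists>i \<in> D. k = Suc m + i)" if "k \<in> S" for k
  proof (cases "k \<le> m")
    case False
    then have "k = Suc m + (k - Suc m)" by simp
    then show ?thesis using that right by metis
  qed simp
  show ?thesis
  proof (cases "nsl (drop (Suc m) x) j")
    case 0
    then have "D = {}" by (simp add: nsl_eq_0_iff D_def)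
    then have "\<forall>k \<in> S. k \<le> m" using split by blast
    then have "nsl x (Suc m + j) = Suc m"
      unfolding nsl_eq_Suc_iff S_def[symmetric] using \<open>m \<in> S\<close> by blast
    then show ?thesis using 0 by (simp add: shift_nsl_def m_def)
  next
    case (Suc q)
    then have "q \<in> D" "\<forall>i \<in> D. i \<le> q" by (simp_all add: nsl_eq_Suc_iff D_def)
    have "k \<le> Suc m + q" if "k \<in> S" for k
      using split[OF that] \<open>\<forall>i \<in> D. i \<le> q\<close> by auto
    with \<open>q \<in> D\<close> have "nsl x (Suc m + j) = Suc (Suc m + q)"
      unfolding nsl_eq_Suc_iff S_def[symmetric] using right by blast
    then show ?thesis using Suc by (simp add: shift_nsl_def m_def)
  qed
qed

lemma nslv_split:
  assumes "distinct x" "x \<noteq> []"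
  shows "nslv x = nslv (take (minpos x) x) @ 0 #
           map (shift_nsl (minpos x)) (nslv (drop (Suc (minpos x)) x))"
proof (rule nth_equalityI)
  have m: "minpos x < length x" using assms minpos_less by simp
  then show "length (nslv x) = length (nslv (take (minpos x) x) @ 0 #
           map (shift_nsl (minpos x)) (nslv (drop (Suc (minpos x)) x)))" by simp
  fix j assume "j < length (nslv x)"
  then have j: "j < length x" by simp
  consider "j < minpos x" | "j = minpos x" | "minpos x < j" by linarith
  then show "nslv x ! j = (nslv (take (minpos x) x) @ 0 #
           map (shift_nsl (minpos x)) (nslv (drop (Suc (minpos x)) x))) ! j"
  proof cases
    case 1 then show ?thesis using j m by (simp add: nth_append nsl_take)
  next
    case 2 then show ?thesis using j m assms by (simp add: nth_append nsl_minpos)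
  next
    case 3
    define i where "i = j - Suc (minpos x)"
    have i: "j = Suc (minpos x) + i" using 3 by (simp add: i_def)
    have "i < length x - Suc (minpos x)" using i j by simp
    from nsl_right_of_minpos[OF assms(1) this] show ?thesis using i j m by (simp add: nth_append)
  qed
qed

lemma nslv_eq_iff:
  assumes "distinct x" "distinct y" "x \<noteq> []" "y \<noteq> []"
  shows "nslv x = nslv y \<longleftrightarrow> minpos x = minpos y \<and>
    nslv (take (minpos x) x) = nslv (take (minpos y) y) \<and>
    nslv (drop (Suc (minpos x)) x) = nslv (drop (Suc (minpos y)) y)"
proof
  assume eq: "nslv x = nslv y"
  then have len: "length x = length y" by (metis length_nslv)
  have mx: "minpos x < length x" and my: "minpos y < length y"
    using assms minpos_less by auto
  have "nsl x (minpos y) = 0" using eq nsl_minpos[OF assms(2,4)] my len by (metis nth_nslv)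
  moreover have "nsl y (minpos x) = 0" using eq nsl_minpos[OF assms(1,3)] mx len by (metis nth_nslv)
  \<comment> \<open>\<open>minpos\<close> is the position of the last zero of \<open>nslv\<close>\<close>
  ultimately have m: "minpos x = minpos y"
    using nsl_eq_0_imp_le_minpos assms mx my len by (metis le_antisym)
  have "nslv (take (minpos x) x) = nslv (take (minpos x) y) \<and>
      map (shift_nsl (minpos x)) (nslv (drop (Suc (minpos x)) x)) =
      map (shift_nsl (minpos x)) (nslv (drop (Suc (minpos x)) y))"
    using eq mx my m unfolding nslv_split[OF assms(1,3)] nslv_split[OF assms(2,4)]
    by (simp add: append_eq_append_conv)
  then show "minpos x = minpos y \<and>
    nslv (take (minpos x) x) = nslv (take (minpos y) y) \<and>
    nslv (drop (Suc (minpos x)) x) = nslv (drop (Suc (minpos y)) y)"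
    using m inj_map_eq_map[OF inj_shift_nsl] by simp
next
  assume "minpos x = minpos y \<and>
    nslv (take (minpos x) x) = nslv (take (minpos y) y) \<and>
    nslv (drop (Suc (minpos x)) x) = nslv (drop (Suc (minpos y)) y)"
  then have "minpos x = minpos y" "nslv (take (minpos y) x) = nslv (take (minpos y) y)"
    "nslv (drop (Suc (minpos y)) x) = nslv (drop (Suc (minpos y)) y)" by auto
  then show "nslv x = nslv y"
    by (simp only: nslv_split[OF assms(1,3)] nslv_split[OF assms(2,4)])
qed

lemma ctree_eq_Leaf_iff: "ctree k x = Leaf \<longleftrightarrow> x = []"
  by (cases "x = []") (simp_all add: ctree_nonempty)

lemma ctree_eq_iff_nslv_eq:
  "distinct x \<Longrightarrow> distinct y \<Longrightarrow> ctree k x = ctree k y \<longleftrightarrow> nslv x = nslv y"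
proof (induction "length x" arbitrary: x y k rule: less_induct)
  case less
  show ?case
  proof (cases "x = [] \<or> y = []")
    case True
    then show ?thesis by (metis ctree_eq_Leaf_iff length_nslv length_0_conv)
  next
    case False
    then have ne: "x \<noteq> []" "y \<noteq> []" by auto
    define m where "m = minpos x"
    have shorter: "length (take m x) < length x" "length (drop (Suc m) x) < length x"
      using ne minpos_less by (auto simp: m_def)
    have "ctree k x = ctree k y \<longleftrightarrow> minpos y = m \<and> ctree k (take m x) = ctree k (take m y) \<and>
        ctree (Suc (k + m)) (drop (Suc m) x) = ctree (Suc (k + m)) (drop (Suc m) y)"
      by (auto simp: ctree_nonempty ne m_def)
    also have "\<dots> \<longleftrightarrow> minpos y = m \<and> nslv (take m x) = nslv (take m y) \<and>
        nslv (drop (Suc m) x) = nslv (drop (Suc m) y)"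
      using less.hyps[OF shorter(1)] less.hyps[OF shorter(2)] less.prems by simp
    also have "\<dots> \<longleftrightarrow> nslv x = nslv y"
      by (auto simp: nslv_eq_iff[OF less.prems ne] m_def)
    finally show ?thesis .
  qed
qed

corollary cart_eq_iff_nslv_eq:
  "distinct x \<Longrightarrow> distinct y \<Longrightarrow> cart x = cart y \<longleftrightarrow> nslv x = nslv y"
  unfolding cart_def by (rule ctree_eq_iff_nslv_eq)

section \<open>Adjacent transpositions\<close>

lemma length_tau [simp]: "length (tau x i) = length x"
  by (simp add: tau_def)

lemma nth_tau:
  "Suc p < length x \<Longrightarrow> k < length x \<Longrightarrow> tau x (Suc p) ! k = x ! transpose p (Suc p) k"
  by (auto simp: tau_def nth_list_update transpose_def)

lemma tau_eq_permute_list: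
  "Suc p < length x \<Longrightarrow> tau x (Suc p) = permute_list (transpose p (Suc p)) x"
  by (rule nth_equalityI) (simp_all add: nth_tau permute_list_nth permutes_swap_id)

lemma distinct_tau: "Suc p < length x \<Longrightarrow> distinct (tau x (Suc p)) = distinct x"
  by (simp add: tau_eq_permute_list permutes_swap_id)

lemma tau_tau: "Suc p < length x \<Longrightarrow> tau (tau x (Suc p)) (Suc p) = x"
  by (simp add: tau_eq_permute_list permute_list_compose[symmetric] permutes_swap_id)

lemma Max_transpose_Suc_image:
  fixes S :: "nat set"
  assumes "finite S" "S \<noteq> {}"
  shows "Max (transpose p (Suc p) ` S) =
    (if Max S = p then Suc p else if Max S = Suc p \<and> p \<notin> S then p else Max S)"
    (is "_ = ?M")
proof (rule Max_eqI)
  have M: "Max S \<in> S" "\<And>k. k \<in> S \<Longrightarrow> k \<le> Max S" using assms by auto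
  show "finite (transpose p (Suc p) ` S)" using assms(1) by simp
  show "y \<le> ?M" if y: "y \<in> transpose p (Suc p) ` S" for y
  proof -
    obtain k where "k \<in> S" "y = transpose p (Suc p) k" using y by blast
    then show ?thesis using M(2)[of k] M(2)[of p] M(2)[of "Suc p"]
      by (auto simp: transpose_def le_Suc_eq)
  qed
  show "?M \<in> transpose p (Suc p) ` S"
  proof (cases "Max S = Suc p \<and> p \<in> S")
    case True
    then show ?thesis by (intro image_eqI[of _ _ p]) auto
  next
    case False
    then show ?thesis using M(1) by (intro image_eqI[of _ _ "Max S"]) (auto simp: transpose_def)
  qed
qed

lemma smaller_left_tau:
  assumes "Suc p < j" "j < length x"
  shows "smaller_left (tau x (Suc p)) j = transpose p (Suc p) ` smaller_left x j"
proof -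
  have "k \<in> smaller_left (tau x (Suc p)) j \<longleftrightarrow> transpose p (Suc p) k \<in> smaller_left x j" for k
    using assms nth_tau[of p x k] nth_tau[of p x j]
    by (auto simp: smaller_left_def transpose_def)
  then show ?thesis by (simp add: set_eq_iff in_transpose_image_iff)
qed

lemma nsl_tau_right:
  assumes "Suc p < j" "j < length x"
  shows "nsl (tau x (Suc p)) j = (if nsl x j = Suc p then Suc (Suc p)
    else if nsl x j = Suc (Suc p) \<and> \<not> x ! p < x ! j then Suc p else nsl x j)"
proof (cases "smaller_left x j = {}")
  case True
  then show ?thesis using smaller_left_tau[OF assms] by (simp add: nsl_def)
next
  case False
  have "p \<in> smaller_left x j \<longleftrightarrow> x ! p < x ! j" using assms by (simp add: smaller_left_def)
  then show ?thesis
    using False smaller_left_tau[OF assms] Max_transpose_Suc_image[of "smaller_left x j" p]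
    by (auto simp: nsl_def)
qed

lemma nsl_tau_left: "j < p \<Longrightarrow> Suc p < length x \<Longrightarrow> nsl (tau x (Suc p)) j = nsl x j"
  by (rule nsl_cong) (simp add: nth_tau transpose_def)

lemma initial_segment_threshold:
  fixes S :: "nat set"
  assumes "S \<subseteq> {..<n}" and down: "\<And>i j. i \<in> S \<Longrightarrow> j \<in> S \<Longrightarrow> i < j \<Longrightarrow> P j \<Longrightarrow> P i"
  shows "\<exists>T \<le> n. \<forall>j \<in> S. P j \<longleftrightarrow> j < T"
proof (cases "\<forall>j \<in> S. P j")
  case True
  then show ?thesis using assms(1) by (intro exI[of _ n]) auto
next
  case False
  define T where "T = (LEAST j. j \<in> S \<and> \<not> P j)"
  have T: "T \<in> S" "\<not> P T"
    using False LeastI_ex[of "\<lambda>j. j \<in> S \<and> \<not> P j"] unfolding T_def by auto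
  have "P j \<longleftrightarrow> j < T" if "j \<in> S" for j
  proof
    assume "P j"
    show "j < T"
    proof (rule ccontr)
      assume "\<not> j < T"
      with \<open>P j\<close> T(2) have "T < j" by (cases "T = j") auto
      with down[OF T(1) that] \<open>P j\<close> T(2) show False by blast
    qed
  next
    assume "j < T"
    with that show "P j" using not_less_Least[of j "\<lambda>j. j \<in> S \<and> \<not> P j"] unfolding T_def by blast
  qed
  then show ?thesis using T assms(1) by (intro exI[of _ T]) auto
qed

(* After exchanging the entries p and Suc p the pointer vector is determined by the old one and by
   A, B, T \<le> n; this bounds the degree of G_n by (n+1)^4. *)
definition swap_nslv :: "nat list \<Rightarrow> nat \<Rightarrow> nat \<Rightarrow> nat \<Rightarrow> nat \<Rightarrow> nat list" where
  "swap_nslv l p A B T = map (\<lambda>j. if j < p then l ! j else if j = p then A else if j = Suc p then B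
     else if l ! j = Suc p then Suc (Suc p) else if l ! j = Suc (Suc p) \<and> T \<le> j then Suc p
     else l ! j) [0..<length l]"

lemma nslv_tau:
  assumes "distinct x" "Suc p < length x"
  obtains A B T where "A \<le> length x" "B \<le> length x" "T \<le> length x"
    "nslv (tau x (Suc p)) = swap_nslv (nslv x) p A B T"
proof -
  define S where "S = {j. Suc p < j \<and> j < length x \<and> nsl x j = Suc (Suc p)}"
  have "\<exists>T \<le> length x. \<forall>j\<in>S. x ! p < x ! j \<longleftrightarrow> j < T"
    \<comment> \<open>the entries pointing to \<open>Suc p\<close> decrease from left to right\<close>
  proof (rule initial_segment_threshold)
    show "S \<subseteq> {..<length x}" by (auto simp: S_def)
    show "x ! p < x ! i" if "i \<in> S" "j \<in> S" "i < j" "x ! p < x ! j" for i j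
      using equal_nsl_imp_decreasing[OF assms(1) \<open>i < j\<close>] that by (force simp: S_def)
  qed
  then obtain T where "T \<le> length x" and T: "\<And>j. j \<in> S \<Longrightarrow> x ! p < x ! j \<longleftrightarrow> j < T"
    by blast
  let ?y = "tau x (Suc p)"
  have "nslv ?y = swap_nslv (nslv x) p (nsl ?y p) (nsl ?y (Suc p)) T"
  proof (rule nth_equalityI)
    fix j assume "j < length (nslv ?y)"
    then have j: "j < length x" by simp
    consider "j < p" | "j = p" | "j = Suc p" | "Suc p < j" by linarith
    then show "nslv ?y ! j = swap_nslv (nslv x) p (nsl ?y p) (nsl ?y (Suc p)) T ! j"
    proof cases
      case 4
      then show ?thesis using j T[of j] by (auto simp: swap_nslv_def nsl_tau_right S_def)
    qed (use j assms in \<open>auto simp: swap_nslv_def nsl_tau_left\<close>)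
  qed (simp add: swap_nslv_def)
  moreover have "nsl ?y p \<le> length x" using nsl_le[of ?y p] assms(2) by linarith
  moreover have "nsl ?y (Suc p) \<le> length x" using nsl_le[of ?y "Suc p"] assms(2) by linarith
  ultimately show ?thesis using that \<open>T \<le> length x\<close> by blast
qed

lemma swap_edge_imp_tau:
  assumes "swap_edge n s t"
  obtains z p where "distinct z" "length z = n" "Suc p < n" "s = cart z" "t = cart (tau z (Suc p))"
proof -
  obtain x y where xy: "x \<in> seqs n" "y \<in> seqs n" "s = cart x" "t = cart y" "s \<noteq> t" "tau_equiv x y"
    using assms unfolding swap_edge_def by blast
  then obtain i where i: "i \<in> {1..n - 1}" "cart (tau x i) = cart y \<or> cart (tau y i) = cart x"
    by (auto simp: tau_equiv_def seqs_def)
  then obtain p where p: "i = Suc p" "Suc p < n" by (cases i) auto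
  from i(2) show ?thesis
  proof
    assume "cart (tau x i) = cart y"
    then show ?thesis using that[of x p] xy p by (auto simp: seqs_def)
  next
    assume "cart (tau y i) = cart x"
    then show ?thesis
      using that[of "tau y i" p] xy p tau_tau[of p y] distinct_tau[of p y] by (auto simp: seqs_def)
  qed
qed

section \<open>The degree of the swap graph and the size of its balls\<close>

definition nslv_of_cart :: "nat tree \<Rightarrow> nat list" where
  "nslv_of_cart s = nslv (SOME x. distinct x \<and> cart x = s)"

definition cart_of_nslv :: "nat list \<Rightarrow> nat tree" where
  "cart_of_nslv l = cart (SOME x. distinct x \<and> nslv x = l)"

lemma nslv_of_cart: "distinct x \<Longrightarrow> nslv_of_cart (cart x) = nslv x"
  unfolding nslv_of_cart_def by (rule someI2[of _ x]) (auto simp: cart_eq_iff_nslv_eq)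

lemma cart_of_nslv: "distinct x \<Longrightarrow> cart_of_nslv (nslv x) = cart x"
  unfolding cart_of_nslv_def by (rule someI2[of _ x]) (auto simp: cart_eq_iff_nslv_eq)

definition swap_neighbours :: "nat \<Rightarrow> nat tree \<Rightarrow> nat tree set" where
  "swap_neighbours n s = (\<lambda>(p, A, B, T). cart_of_nslv (swap_nslv (nslv_of_cart s) p A B T)) `
     ({..n} \<times> {..n} \<times> {..n} \<times> {..n})"

lemma swap_edge_imp_neighbour: "swap_edge n s t \<Longrightarrow> t \<in> swap_neighbours n s"
proof -
  assume "swap_edge n s t"
  then obtain z p where z: "distinct z" "length z = n" "Suc p < n" "s = cart z" "t = cart (tau z (Suc p))"
    by (rule swap_edge_imp_tau)
  then obtain A B T where ABT: "A \<le> n" "B \<le> n" "T \<le> n"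
    "nslv (tau z (Suc p)) = swap_nslv (nslv z) p A B T"
    by (metis nslv_tau)
  have "t = cart_of_nslv (nslv (tau z (Suc p)))" using z by (simp add: cart_of_nslv distinct_tau)
  then have "t = cart_of_nslv (swap_nslv (nslv_of_cart s) p A B T)"
    using z ABT(4) by (simp add: nslv_of_cart)
  then show ?thesis
    using ABT z(3) unfolding swap_neighbours_def by (auto intro!: image_eqI[of _ _ "(p, A, B, T)"])
qed

lemma finite_swap_neighbours: "finite (swap_neighbours n s)"
  by (simp add: swap_neighbours_def)

lemma card_swap_neighbours: "card (swap_neighbours n s) \<le> Suc n ^ 4"
  unfolding swap_neighbours_def
  by (rule card_image_le[THEN order_trans]) (simp_all add: card_cartesian_product eval_nat_numeral)

primrec reach_within :: "('a \<Rightarrow> 'a set) \<Rightarrow> 'a \<Rightarrow> nat \<Rightarrow> 'a set" where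
  "reach_within N u 0 = {u}"
| "reach_within N u (Suc k) = reach_within N u k \<union> (\<Union>s \<in> reach_within N u k. N s)"

lemma reach_within_mono: "k \<le> k' \<Longrightarrow> reach_within N u k \<subseteq> reach_within N u k'"
  by (induction k' rule: dec_induct) auto

lemma reach_within_path:
  "(\<And>j. j < k \<Longrightarrow> f (Suc j) \<in> N (f j)) \<Longrightarrow> f k \<in> reach_within N (f 0) k"
  by (induction k) auto

lemma card_reach_within:
  assumes "\<And>s. finite (N s)" "\<And>s. card (N s) \<le> D"
  shows "finite (reach_within N u k) \<and> card (reach_within N u k) \<le> Suc D ^ k"
proof (induction k)
  case (Suc k)
  let ?R = "reach_within N u k"
  have "card (\<Union>s \<in> ?R. N s) \<le> (\<Sum>s \<in> ?R. card (N s))"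
    using Suc.IH by (intro card_UN_le) simp
  also have "\<dots> \<le> card ?R * D"
    using sum_bounded_above[of ?R "\<lambda>s. card (N s)" D] assms(2) by simp
  finally have "card (reach_within N u (Suc k)) \<le> card ?R * Suc D"
    using card_Un_le[of ?R "\<Union>s \<in> ?R. N s"] by simp
  also have "\<dots> \<le> Suc D ^ k * Suc D" using Suc.IH mult_le_mono1 by blast
  finally show ?case using Suc.IH assms(1) by (simp add: mult.commute)
qed simp

lemma swap_walk_imp_reach_within:
  assumes "swap_walk n u v k"
  shows "v \<in> reach_within (swap_neighbours n) u k"
proof -
  obtain ps where ps: "length ps = k + 1" "hd ps = u" "last ps = v"
    "\<forall>j<k. swap_edge n (ps ! j) (ps ! (j + 1))"
    using assms unfolding swap_walk_def by blast
  have "ps ! k \<in> reach_within (swap_neighbours n) (ps ! 0) k"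
    by (rule reach_within_path) (use ps(4) in \<open>auto intro: swap_edge_imp_neighbour\<close>)
  moreover have "ps \<noteq> []" using ps(1) by auto
  then have "ps ! 0 = u" "ps ! k = v" using ps(1-3) by (simp_all add: hd_conv_nth last_conv_nth)
  ultimately show ?thesis by simp
qed

lemma swap_dist_le_imp_walk:
  assumes "swap_dist n u v \<le> enat d"
  obtains k where "k \<le> d" "swap_walk n u v k"
proof -
  obtain k where "swap_walk n u v k" "enat k < enat (Suc d)"
    using assms unfolding swap_dist_def INF_le_iff by (meson enat_ord_simps(2) lessI mem_Collect_eq)
  then show ?thesis by (intro that[of k]) simp_all
qed

lemma swap_vertices_subset_reach_within:
  assumes "swap_diameter n = enat d" "u \<in> swap_vertices n"
  shows "swap_vertices n \<subseteq> reach_within (swap_neighbours n) u d"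
proof
  fix v assume "v \<in> swap_vertices n"
  with assms(2) have "(u, v) \<in> swap_vertices n \<times> swap_vertices n" by simp
  then have "swap_dist n (fst (u, v)) (snd (u, v)) \<le> swap_diameter n"
    unfolding swap_diameter_def by (rule SUP_upper)
  then have "swap_dist n u v \<le> enat d" using assms(1) by simp
  then obtain k where "k \<le> d" "swap_walk n u v k" by (rule swap_dist_le_imp_walk)
  from \<open>swap_walk n u v k\<close> have "v \<in> reach_within (swap_neighbours n) u k"
    by (rule swap_walk_imp_reach_within)
  then show "v \<in> reach_within (swap_neighbours n) u d"
    by (rule subsetD[OF reach_within_mono[OF \<open>k \<le> d\<close>]])
qed

lemma card_swap_vertices_le:
  assumes "swap_diameter n = enat d"
  shows "finite (swap_vertices n) \<and> card (swap_vertices n) \<le> Suc (Suc n ^ 4) ^ d"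
proof -
  let ?u = "cart (map int [0..<n])"
  have "?u \<in> swap_vertices n"
    unfolding swap_vertices_def seqs_def by (rule imageI) (simp add: distinct_map inj_on_def)
  then have "swap_vertices n \<subseteq> reach_within (swap_neighbours n) ?u d"
    using assms by (rule swap_vertices_subset_reach_within[rotated])
  moreover have "finite (reach_within (swap_neighbours n) ?u d) \<and>
      card (reach_within (swap_neighbours n) ?u d) \<le> Suc (Suc n ^ 4) ^ d"
    by (rule card_reach_within) (simp_all add: finite_swap_neighbours card_swap_neighbours)
  ultimately show ?thesis by (meson card_mono finite_subset order_trans)
qed

section \<open>Counting vertices\<close>

definition ascent_seq :: "nat set \<Rightarrow> nat \<Rightarrow> int list" where
  "ascent_seq B n = map (\<lambda>j. if j \<in> B then int j else - int j) [0..<n]"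

lemma length_ascent_seq [simp]: "length (ascent_seq B n) = n"
  by (simp add: ascent_seq_def)

lemma ascent_seq_in_seqs: "ascent_seq B n \<in> seqs n"
  unfolding seqs_def ascent_seq_def by (auto simp: distinct_map inj_on_def split: if_splits)

lemma ascent_seq_ascent_iff:
  "0 < j \<Longrightarrow> j < n \<Longrightarrow> ascent_seq B n ! (j - 1) < ascent_seq B n ! j \<longleftrightarrow> j \<in> B"
  by (auto simp: ascent_seq_def)

lemma card_swap_vertices_ge:
  assumes "finite (swap_vertices n)"
  shows "2 ^ (n - 1) \<le> card (swap_vertices n)"
proof -
  have "inj_on (\<lambda>B. cart (ascent_seq B n)) (Pow {1..<n})"
  proof (rule inj_onI)
    fix B B' assume B: "B \<in> Pow {1..<n}" "B' \<in> Pow {1..<n}"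
      and "cart (ascent_seq B n) = cart (ascent_seq B' n)"
    then have eq: "nslv (ascent_seq B n) = nslv (ascent_seq B' n)"
      using ascent_seq_in_seqs by (simp add: cart_eq_iff_nslv_eq seqs_def)
    have "j \<in> B \<longleftrightarrow> j \<in> B'" if "j \<in> {1..<n}" for j
    proof -
      have "nsl (ascent_seq B n) j = nsl (ascent_seq B' n) j"
        using arg_cong[OF eq, of "\<lambda>l. l ! j"] that by simp
      moreover have "j \<in> C \<longleftrightarrow> nsl (ascent_seq C n) j = j" for C
        using nsl_ascent_iff[of j "ascent_seq C n"] ascent_seq_ascent_iff[of j n C] that by simp
      ultimately show ?thesis by simp
    qed
    then show "B = B'" using B by blast
  qed
  moreover have "(\<lambda>B. cart (ascent_seq B n)) ` Pow {1..<n} \<subseteq> swap_vertices n"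
    using ascent_seq_in_seqs by (auto simp: swap_vertices_def)
  ultimately have "card (Pow {1..<n}) \<le> card (swap_vertices n)"
    using assms by (rule card_inj_on_le)
  then show ?thesis by (simp add: card_Pow)
qed

lemma div_ln_le_of_two_pow_le:
  fixes n d :: nat
  assumes "2 \<le> n" "2 ^ (n - 1) \<le> Suc (Suc n ^ 4) ^ d"
  shows "real n / ln (real n) \<le> 40 * real d"
proof -
  have "2 * n \<le> n * n" using mult_le_mono1[OF assms(1)] .
  then have "Suc n \<le> n ^ 2" using assms(1) unfolding power2_eq_square by linarith
  then have "Suc n ^ 4 \<le> n ^ 8" using power_mono[of "Suc n" "n ^ 2" 4] by (simp flip: power_mult)
  have "(2::nat) ^ 2 \<le> n ^ 2" using assms(1) by (rule power_mono) simp
  then have "n ^ 8 * 4 \<le> n ^ 8 * n ^ 2" by (intro mult_le_mono2) simp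
  have "Suc (Suc n ^ 4) \<le> Suc (n ^ 8)" using \<open>Suc n ^ 4 \<le> n ^ 8\<close> by simp
  also have "\<dots> \<le> n ^ 8 * 4" using assms(1) by simp
  also have "\<dots> \<le> n ^ 10" using \<open>n ^ 8 * 4 \<le> n ^ 8 * n ^ 2\<close> by (simp flip: power_add)
  finally have "Suc (Suc n ^ 4) ^ d \<le> (n ^ 10) ^ d" by (rule power_mono) simp
  with assms(2) have "2 ^ (n - 1) \<le> n ^ (10 * d)" by (simp add: power_mult)
  then have "(2::real) ^ (n - 1) \<le> real n ^ (10 * d)"
    by (metis of_nat_le_iff of_nat_numeral of_nat_power)
  then have "ln ((2::real) ^ (n - 1)) \<le> ln (real n ^ (10 * d))" using assms(1) by simp
  then have ln_bound: "real (n - 1) * ln 2 \<le> real (10 * d) * ln (real n)" by (simp add: ln_realpow)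
  have "1 \<le> 2 * ln (2::real)" using ln_add1_ge[of 1] by simp
  have "real n \<le> 2 * real (n - 1)" using assms(1) by (simp add: of_nat_diff)
  also have "\<dots> \<le> 2 * real (n - 1) * (2 * ln 2)"
    using mult_left_mono[OF \<open>1 \<le> 2 * ln 2\<close>, of "2 * real (n - 1)"] by simp
  also have "\<dots> = 4 * (real (n - 1) * ln 2)" by simp
  also have "\<dots> \<le> 40 * real d * ln (real n)" using ln_bound by (simp add: algebra_simps)
  finally have "real n \<le> 40 * real d * ln (real n)" .
  moreover have "0 < ln (real n)" using assms(1) by simp
  ultimately show ?thesis by (simp add: pos_divide_le_eq)
qed

theorem lemma11:
  "\<exists>c > 0. \<forall>\<^sub>F n in sequentially.
     ereal (c * (real n / ln (real n))) \<le> ereal_of_enat (swap_diameter n)"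
proof (intro exI conjI)
  show "(0::real) < 1 / 40" by simp
  show "\<forall>\<^sub>F n in sequentially.
      ereal (1 / 40 * (real n / ln (real n))) \<le> ereal_of_enat (swap_diameter n)"
    unfolding eventually_sequentially
  proof (intro exI allI impI)
    fix n :: nat assume "2 \<le> n"
    show "ereal (1 / 40 * (real n / ln (real n))) \<le> ereal_of_enat (swap_diameter n)"
    proof (cases "swap_diameter n")
      case (enat d)
      then have "2 ^ (n - 1) \<le> Suc (Suc n ^ 4) ^ d"
        using card_swap_vertices_le card_swap_vertices_ge order_trans by blast
      with \<open>2 \<le> n\<close> have "real n / ln (real n) \<le> 40 * real d"
        by (rule div_ln_le_of_two_pow_le)
      then show ?thesis using enat by simp
    qed simp
  qed
qed

end
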